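(* Let $n$ be a positive integer. (1) For $q>2$, $$\tilde\psi^{(n)}(q)=\frac12(-1)^{n+1}(n-1)!\left(\frac1{(q-2)^n}-\frac1{(q-1)^n}\right)+(-1)^n\sum_{k=1}^\infty\frac{2^k(n+k)!}{(k+1)!}\,\zeta_E(n+k+1,q).$$ (2) For $q>1$, $$\tilde\psi^{(n)}(q)=\frac12(-1)^{n+1}(n-1)!\left(\frac1{(q-1)^n}-\frac1{q^n}\right)+(-1)^n\sum_{k=1}^\infty\frac{(n+2k)!}{(2k+1)!}\,\zeta_E(n+2k+1,q).$$
   Context: For $q>0$, $\zeta_E(z,q)=\sum_{n=0}^\infty (-1)^n (n+q)^{-z}$ for $\mathrm{Re}(z)>0$, extended by analytic continuation to an entire function of $z$. The modified digamma function is $\tilde\psi(q):=-\zeta_E(1,q)=-\sum_{n\ge0}\frac{(-1)^n}{n+q}$ for $q>0$, and $\tilde\psi^{(n)}$ denotes its $n$-th derivative in $q$. *)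

theory Defs
  imports "HOL-Analysis.Analysis"
begin

text \<open>Alternating Hurwitz zeta function for real argument z > 0 and q > 0,
  given by its defining (convergent) series. Only used here at z \<ge> 1.\<close>
definition zeta_E :: "real \<Rightarrow> real \<Rightarrow> real" where
  "zeta_E z q = (\<Sum>m. (-1) ^ m / (real m + q) powr z)"

definition psi_tilde :: "real \<Rightarrow> real" where
  "psi_tilde q = - zeta_E 1 q"

end

theory Submission
  imports Defs
begin

(* Since psi_tilde^(n)(q) = (-1)^(n+1) n! zeta_E(n+1, q), both identities are relations between
   values of zeta_E.  Expanding (x - h)^(-n) binomially in powers of h/x and putting x = m + q gives
     1/(m+q-2)^n - 1/(m+q)^n   = sum_i C(n+i, i+1) 2^(i+1) / (m+q)^(n+1+i),
     1/(m+q-1)^n - 1/(m+q+1)^n = sum_i 2 C(n+2i, 2i+1) / (m+q)^(n+1+2i).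
   Multiplying by (-1)^m and summing over m, the left-hand sides telescope to 1/r^n - 1/(r+1)^n
   (r = q-2, resp. q-1), while the right-hand sides, having nonnegative coefficients, may be summed
   column by column, giving series of zeta_E(n+1+i, q).  Their i = 0 term is 2n zeta_E(n+1, q),
   a multiple of psi_tilde^(n)(q); solving for it yields both formulas. *)

lemma summable_alternating_inverse_power:
  assumes "r > 0" "k \<ge> 1"
  shows "summable (\<lambda>m. (-1) ^ m / (real m + r) ^ k :: real)"
proof -
  have "(\<lambda>m. 1 / (real m + r) ^ k) \<longlonglongrightarrow> 0"
  proof -
    have "(\<lambda>m. inverse (r + real m)) \<longlonglongrightarrow> 0"
      by (intro tendsto_inverse_0_at_top
          filterlim_tendsto_add_at_top[OF tendsto_const filterlim_real_sequentially])
    from tendsto_power[OF this, of k] show ?thesis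
      using assms by (simp add: power_0_left power_one_over inverse_eq_divide add.commute)
  qed
  moreover have "1 / (real (Suc m) + r) ^ k \<le> 1 / (real m + r) ^ k" for m
    using assms by (intro divide_left_mono power_mono mult_pos_pos) auto
  ultimately have "summable (\<lambda>m. (-1) ^ m * (1 / (real m + r) ^ k))"
    using assms by (intro summable_Leibniz'(1)) auto
  then show ?thesis by simp
qed

lemma summable_inverse_power_shift:
  assumes "r > 0" "k \<ge> 2"
  shows "summable (\<lambda>m. 1 / (real m + r) ^ k :: real)"
proof (rule summable_comparison_test')
  show "summable (\<lambda>m. inverse (real m ^ k))"
    using assms by (intro inverse_power_summable) auto
  show "norm (1 / (real m + r) ^ k) \<le> inverse (real m ^ k)" if "m \<ge> 1" for m
    using assms that by (simp add: divide_simps power_mono)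
qed

lemma has_real_derivative_inverse_power_shift:
  assumes "c + x \<noteq> (0::real)"
  shows "((\<lambda>x. a / (c + x) ^ k) has_real_derivative - real k * a / (c + x) ^ Suc k) (at x within S)"
proof (cases k)
  case (Suc j)
  have quotient: "(0 * y ^ k - a * (real k * y ^ j)) / (y ^ k * y ^ k) = - real k * a / y ^ Suc k"
    if "y \<noteq> 0" for y :: real
    using that by (simp add: Suc field_simps)
  have "((\<lambda>x. (c + x) ^ k) has_real_derivative real k * (c + x) ^ j) (at x within S)"
    using DERIV_power[OF DERIV_add[OF DERIV_const DERIV_ident], where n = k] by (simp add: Suc)
  from DERIV_divide[OF DERIV_const this, of a] show ?thesis
    unfolding quotient[OF assms] using assms by simp
qed simp

lemma sums_iterated_of_summable_on_Times:
  fixes F :: "nat \<Rightarrow> nat \<Rightarrow> real"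
  assumes "(\<lambda>(x, y). F x y) summable_on UNIV \<times> UNIV"
  shows "(\<lambda>x. \<Sum>y. F x y) sums infsum (\<lambda>(x, y). F x y) (UNIV \<times> UNIV)"
proof -
  have sums_infsum: "f sums infsum f UNIV" if "f summable_on UNIV" for f :: "nat \<Rightarrow> real"
    using that by (intro has_sum_imp_sums has_sum_infsum)
  have rows: "(\<Sum>y. F x y) = infsum (F x) UNIV" for x
    using sums_infsum[OF summable_on_SigmaD1[of F UNIV "\<lambda>_. UNIV", OF assms UNIV_I]]
    by (simp add: sums_iff)
  have "(\<lambda>x. infsum (F x) UNIV) sums infsum (\<lambda>(x, y). F x y) (UNIV \<times> UNIV)"
    using sums_infsum[OF summable_on_Sigma_banach[of F UNIV "\<lambda>_. UNIV", OF assms]]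
    unfolding infsum_Sigma'_banach[of F UNIV "\<lambda>_. UNIV", OF assms] .
  then show ?thesis
    unfolding rows .
qed

lemma sums_suminf_swap:
  fixes G :: "nat \<Rightarrow> nat \<Rightarrow> real"
  assumes rows: "\<And>m. (\<lambda>j. \<bar>G m j\<bar>) sums A m" and "summable A"
  shows "(\<lambda>j. \<Sum>m. G m j) sums (\<Sum>m. \<Sum>j. G m j)"
proof -
  have A_nonneg: "A m \<ge> 0" for m
    using rows[of m] by (metis abs_ge_zero sums_iff suminf_nonneg)
  have "(\<lambda>p. norm (case p of (m, j) \<Rightarrow> G m j)) summable_on UNIV \<times> UNIV"
    unfolding real_norm_def
  proof (rule summable_on_SigmaI)
    show "((\<lambda>j. \<bar>case (m, j) of (m, j) \<Rightarrow> G m j\<bar>) has_sum A m) UNIV" for m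
      using sums_nonneg_imp_has_sum[OF rows[of m]] by simp
    show "A summable_on UNIV"
      using assms(2) A_nonneg by (simp add: summable_on_UNIV_nonneg_real_iff)
  qed simp
  then have G: "(\<lambda>(m, j). G m j) summable_on UNIV \<times> UNIV"
    by (rule abs_summable_summable)
  then have G': "(\<lambda>(j, m). G m j) summable_on UNIV \<times> UNIV"
    by (subst summable_on_swap) (simp add: case_prod_unfold)
  have "(\<lambda>j. \<Sum>m. G m j) sums infsum (\<lambda>(j, m). G m j) (UNIV \<times> UNIV)"
    by (rule sums_iterated_of_summable_on_Times[OF G'])
  also have "infsum (\<lambda>(j, m). G m j) (UNIV \<times> UNIV)
      = infsum (\<lambda>(m, j). G m j) (UNIV \<times> UNIV)"
  proof (rule infsumI)
    show "((\<lambda>(j, m). G m j) has_sum infsum (\<lambda>(m, j). G m j) (UNIV \<times> UNIV))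
            (UNIV \<times> UNIV)"
      using has_sum_infsum[OF G] by (subst (asm) has_sum_swap) (simp add: case_prod_unfold)
  qed
  also have "\<dots> = (\<Sum>m. \<Sum>j. G m j)"
    using sums_iterated_of_summable_on_Times[OF G] by (simp add: sums_iff)
  finally show ?thesis .
qed

lemma summable_telescoping_2:
  fixes u :: "nat \<Rightarrow> real"
  assumes "decseq u" and "\<And>m. u m \<ge> 0"
  shows "summable (\<lambda>m. u m - u (m+2))"
proof (rule summableI_nonneg_bounded)
  show "0 \<le> u m - u (m+2)" for m
    using \<open>decseq u\<close> by (simp add: decseq_def)
  have "(\<Sum>m<N. u m - u (m+2)) = u 0 + u 1 - u N - u (N+1)" for N
    by (induction N) (auto simp: eval_nat_numeral)
  then show "(\<Sum>m<N. u m - u (m+2)) \<le> u 0 + u 1" for N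
    using assms(2)[of N] assms(2)[of "N+1"] by simp
qed

lemma sums_alternating_telescoping_2:
  fixes u :: "nat \<Rightarrow> real"
  assumes "summable (\<lambda>m. (-1) ^ m * u m)"
  shows "(\<lambda>m. (-1) ^ m * (u m - u (m+2))) sums (u 0 - u 1)"
proof -
  let ?S = "\<Sum>m. (-1) ^ m * u m"
  have "(\<lambda>m. (-1) ^ m * u m) sums ?S"
    using assms by (rule summable_sums)
  moreover from sums_split_initial_segment[OF this, of 2]
  have "(\<lambda>m. (-1) ^ (m+2) * u (m+2)) sums (?S - (\<Sum>i<2. (-1) ^ i * u i))"
    by simp
  ultimately have "(\<lambda>m. (-1) ^ m * u m - (-1) ^ (m+2) * u (m+2)) sums (\<Sum>i<2. (-1) ^ i * u i)"
    using sums_diff by fastforce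
  then show ?thesis
    by (simp add: eval_nat_numeral algebra_simps)
qed

lemma sums_inverse_power_binomial:
  fixes h x :: real
  assumes n: "n \<ge> 1" and hx: "\<bar>h\<bar> < x"
  shows "(\<lambda>j. real (n + j - 1 choose j) * h ^ j / x ^ (n + j)) sums (1 / (x - h) ^ n)"
proof -
  have x: "x > 0" using hx by linarith
  have "\<bar>- (h / x)\<bar> < 1" using hx x by (simp add: abs_div)
  from sums_mult2[OF gen_binomial_real[OF this, of "- real n"], of "1 / x ^ n"]
  have "(\<lambda>j. (- real n gchoose j) * (- (h / x)) ^ j * (1 / x ^ n)) sums
          ((1 + - (h / x)) powr (- real n) * (1 / x ^ n))" .
  moreover have "(- real n gchoose j) * (- (h / x)) ^ j * (1 / x ^ n)
      = real (n + j - 1 choose j) * h ^ j / x ^ (n + j)" for j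
  proof -
    have "(- real n gchoose j) = (-1) ^ j * real (n + j - 1 choose j)"
      using n by (simp add: gbinomial_minus binomial_gbinomial)
    then show ?thesis
      using x by (simp add: power_minus' power_add field_simps)
  qed
  moreover have "(1 + - (h / x)) powr (- real n) * (1 / x ^ n) = 1 / (x - h) ^ n"
  proof -
    have "1 - h / x > 0" using hx x by (simp add: field_simps)
    moreover have "(1 - h / x) ^ n * x ^ n = (x - h) ^ n"
      using x by (simp add: power_mult_distrib[symmetric] field_simps)
    ultimately show ?thesis
      using x by (simp add: powr_minus powr_realpow field_simps)
  qed
  ultimately show ?thesis by simp
qed

lemma sums_inverse_power_diff:
  fixes h x :: real
  assumes "n \<ge> 1" and "\<bar>h\<bar> < x"
  shows "(\<lambda>i. real (n + i choose (i+1)) * h ^ (i+1) / x ^ (n + 1 + i)) sums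
           (1 / (x - h) ^ n - 1 / x ^ n)"
  using sums_split_initial_segment[OF sums_inverse_power_binomial[OF assms], of 1]
  by (simp add: add_ac)

lemma sums_inverse_power_symmetric_diff:
  fixes h x :: real
  assumes n: "n \<ge> 1" and hx: "\<bar>h\<bar> < x"
  shows "(\<lambda>i. 2 * real (n + 2*i choose (2*i+1)) * h ^ (2*i+1) / x ^ (n + 1 + 2*i)) sums
           (1 / (x - h) ^ n - 1 / (x + h) ^ n)"
proof -
  define b where "b h j = real (n + j - 1 choose j) * h ^ j / x ^ (n + j)" for h j
  have "(\<lambda>j. b h j - b (-h) j) sums (1 / (x - h) ^ n - 1 / (x - - h) ^ n)"
    unfolding b_def using hx by (intro sums_diff sums_inverse_power_binomial n) auto
  moreover have "b h j - b (-h) j = 0" if "j \<notin> range (\<lambda>i. 2*i+1)" for j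
  proof -
    have "even j" using that by (metis oddE range_eqI)
    then show ?thesis by (simp add: b_def)
  qed
  ultimately have "(\<lambda>i. b h (2*i+1) - b (-h) (2*i+1)) sums (1 / (x - h) ^ n - 1 / (x + h) ^ n)"
    by (subst sums_mono_reindex[of "\<lambda>i. 2*i+1"]) (auto simp: strict_mono_def)
  then show ?thesis
    by (simp add: b_def add_ac mult_ac)
qed

lemma zeta_E_of_nat:
  assumes "q > 0"
  shows "zeta_E (real k) q = (\<Sum>m. (-1) ^ m / (real m + q) ^ k)"
  using assms by (simp add: zeta_E_def powr_realpow add_pos_nonneg)

lemma has_real_derivative_zeta_E:
  assumes q: "q > 0" and k: "k \<ge> 1"
  shows "((\<lambda>x. zeta_E (real k) x) has_real_derivative - real k * zeta_E (real (Suc k)) q) (at q)"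
proof -
  define S where "S = {q/2<..}"
  have "((\<lambda>x. \<Sum>m. (-1) ^ m / (real m + x) ^ k) has_real_derivative
          (\<Sum>m. - real k * (-1) ^ m / (real m + q) ^ Suc k)) (at q)"
  proof (rule has_field_derivative_series'(2)[of S _ _ q])
    show "((\<lambda>x. (-1) ^ m / (real m + x) ^ k) has_field_derivative
            - real k * (-1) ^ m / (real m + x) ^ Suc k) (at x within S)" if "x \<in> S" for m x
      using that q by (intro has_real_derivative_inverse_power_shift) (auto simp: S_def)
    show "uniformly_convergent_on S (\<lambda>n x. \<Sum>m<n. - real k * (-1) ^ m / (real m + x) ^ Suc k)"
    proof (rule Weierstrass_m_test')
      show "summable (\<lambda>m. real k * (1 / (real m + q/2) ^ Suc k))"
        using q k by (intro summable_mult summable_inverse_power_shift) auto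
      show "norm (- real k * (-1) ^ m / (real m + x) ^ Suc k)
              \<le> real k * (1 / (real m + q/2) ^ Suc k)"
        if "x \<in> S" for m x
      proof -
        have lower: "0 < real m + q/2" "real m + q/2 \<le> real m + x"
          using that q by (auto simp: S_def)
        then have "1 / (real m + x) ^ Suc k \<le> 1 / (real m + q/2) ^ Suc k"
          by (intro divide_left_mono power_mono mult_pos_pos zero_less_power) auto
        then have "real k * (1 / (real m + x) ^ Suc k) \<le> real k * (1 / (real m + q/2) ^ Suc k)"
          by (rule mult_left_mono) simp
        then show ?thesis
          using lower by (simp add: norm_divide abs_mult power_abs)
      qed
    qed
    show "summable (\<lambda>m. (-1) ^ m / (real m + q) ^ k)"
      using q k by (rule summable_alternating_inverse_power)
  qed (use q in \<open>auto simp: S_def interior_open\<close>)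
  also have "(\<Sum>m. - real k * (-1) ^ m / (real m + q) ^ Suc k) = - real k * zeta_E (real (Suc k)) q"
    unfolding zeta_E_of_nat[OF q]
    using suminf_mult[OF summable_alternating_inverse_power[OF q, of "Suc k"], of "- real k"] by simp
  finally show ?thesis
    by (rule has_field_derivative_transform_within_open[of _ _ _ "{0<..}"])
       (use q in \<open>auto simp: zeta_E_of_nat\<close>)
qed

lemma higher_deriv_psi_tilde:
  assumes "q > 0"
  shows "(deriv ^^ n) psi_tilde q = (-1) ^ (n+1) * fact n * zeta_E (real (n+1)) q"
  using assms
proof (induction n arbitrary: q)
  case 0
  then show ?case by (simp add: psi_tilde_def)
next
  case (Suc n)
  let ?c = "(-1) ^ (n+1) * fact n :: real"
  have "((\<lambda>x. ?c * zeta_E (real (n+1)) x) has_real_derivative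
          ?c * (- real (n+1) * zeta_E (real (n+2)) q)) (at q)"
    using has_real_derivative_zeta_E[OF Suc.prems, of "n+1"] by (intro DERIV_cmult) simp
  then have "((deriv ^^ n) psi_tilde has_real_derivative
          ?c * (- real (n+1) * zeta_E (real (n+2)) q)) (at q)"
    by (rule has_field_derivative_transform_within_open[of _ _ _ "{0<..}"])
       (use Suc in \<open>auto\<close>)
  then show ?case
    by (simp add: DERIV_imp_deriv algebra_simps)
qed

lemma sums_zeta_E_of_inverse_power_expansion:
  fixes c :: "nat \<Rightarrow> real" and e :: "nat \<Rightarrow> nat"
  assumes q: "q > 0" and r: "r > 0" and n: "n \<ge> 1"
    and c: "\<And>j. c j \<ge> 0" and e: "\<And>j. e j \<ge> 1"
    and rows: "\<And>m. (\<lambda>j. c j / (real m + q) ^ e j) sums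
                    (1 / (real m + r) ^ n - 1 / (real m + r + 2) ^ n)"
  shows "(\<lambda>j. c j * zeta_E (real (e j)) q) sums (1 / r ^ n - 1 / (r + 1) ^ n)"
proof -
  define u where "u m = 1 / (real m + r) ^ n" for m
  define G where "G m j = (-1) ^ m * (c j / (real m + q) ^ e j)" for m j
  have rows_u: "(\<lambda>j. c j / (real m + q) ^ e j) sums (u m - u (m+2))" for m
    using rows[of m] by (simp add: u_def add_ac)
  have "decseq u"
    using r by (auto simp: decseq_def u_def intro!: divide_left_mono power_mono mult_pos_pos)
  then have "summable (\<lambda>m. u m - u (m+2))"
    by (rule summable_telescoping_2) (use r in \<open>simp add: u_def\<close>)
  moreover have "(\<lambda>j. \<bar>G m j\<bar>) sums (u m - u (m+2))" for m
    using rows_u[of m] q c by (simp add: G_def abs_mult power_abs add_pos_nonneg)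
  ultimately have "(\<lambda>j. \<Sum>m. G m j) sums (\<Sum>m. \<Sum>j. G m j)"
    by (intro sums_suminf_swap)
  moreover have "(\<Sum>j. G m j) = (-1) ^ m * (u m - u (m+2))" for m
    unfolding G_def using sums_mult[OF rows_u[of m], of "(-1) ^ m"] by (simp add: sums_iff)
  moreover have "(\<Sum>m. G m j) = c j * zeta_E (real (e j)) q" for j
    unfolding G_def zeta_E_of_nat[OF q]
    using suminf_mult[OF summable_alternating_inverse_power[OF q e[of j]], of "c j"]
    by (simp add: mult_ac)
  moreover have "(\<lambda>m. (-1) ^ m * (u m - u (m+2))) sums (u 0 - u 1)"
    using summable_alternating_inverse_power[OF r n]
    by (intro sums_alternating_telescoping_2) (simp add: u_def)
  ultimately show ?thesis
    by (simp add: sums_iff u_def add_ac)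
qed

lemma higher_deriv_psi_tilde_via_zeta_E_series:
  fixes c t :: "nat \<Rightarrow> real" and e :: "nat \<Rightarrow> nat"
  assumes n: "n \<ge> 1" and q: "q > 0"
    and series: "(\<lambda>j. c j * zeta_E (real (e j)) q) sums T"
    and head: "c 0 = 2 * real n" "e 0 = n + 1"
    and tail: "\<And>k. c (Suc k) * zeta_E (real (e (Suc k))) q = 2 / fact (n - 1) * t k"
  shows "summable t \<and>
         (deriv ^^ n) psi_tilde q = 1/2 * (-1) ^ (n+1) * fact (n - 1) * T + (-1) ^ n * suminf t"
proof -
  define F :: real where "F = fact (n - 1)"
  define Z where "Z = zeta_E (real (n+1)) q"
  have F: "F > 0" by (simp add: F_def)
  from sums_split_initial_segment[OF series, of 1]
  have "(\<lambda>k. 2 / F * t k) sums (T - 2 * real n * Z)"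
    using tail head by (simp add: F_def Z_def)
  from sums_mult_D[OF this] have t: "t sums (F / 2 * (T - 2 * real n * Z))"
    using F by (simp add: field_simps)
  have "fact n = real n * F"
    using n by (simp add: F_def fact_reduce)
  then have "(deriv ^^ n) psi_tilde q
      = 1/2 * (-1) ^ (n+1) * F * T + (-1) ^ n * (F / 2 * (T - 2 * real n * Z))"
    using higher_deriv_psi_tilde[OF q, of n] by (simp add: Z_def algebra_simps)
  with t show ?thesis
    by (simp add: F_def sums_iff)
qed

lemma higher_deriv_psi_tilde_shift_two:
  fixes q :: real
  assumes n: "n \<ge> 1" and q: "q > 2"
  shows "summable (\<lambda>k. 2 ^ (k+1) * fact (n + k + 1) / fact (k + 2)
                           * zeta_E (real (n + k + 2)) q)
         \<and> (deriv ^^ n) psi_tilde q =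
             1/2 * (-1) ^ (n+1) * fact (n - 1) * (1 / (q - 2) ^ n - 1 / (q - 1) ^ n)
             + (-1) ^ n * (\<Sum>k. 2 ^ (k+1) * fact (n + k + 1) / fact (k + 2)
                           * zeta_E (real (n + k + 2)) q)"
proof (rule higher_deriv_psi_tilde_via_zeta_E_series[OF n])
  let ?c = "\<lambda>j. real (n + j choose (j+1)) * 2 ^ (j+1)"
  show "(\<lambda>j. ?c j * zeta_E (real (n + 1 + j)) q) sums (1 / (q - 2) ^ n - 1 / (q - 1) ^ n)"
  proof -
    have "(\<lambda>j. ?c j / (real m + q) ^ (n + 1 + j)) sums
            (1 / (real m + (q - 2)) ^ n - 1 / (real m + (q - 2) + 2) ^ n)" for m
      using sums_inverse_power_diff[OF n, of 2 "real m + q"] q by (simp add: mult_ac add_diff_eq)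
    from sums_zeta_E_of_inverse_power_expansion[OF _ _ n _ _ this] q show ?thesis
      by simp
  qed
  show "?c (Suc k) * zeta_E (real (n + 1 + Suc k)) q =
        2 / fact (n - 1) * (2 ^ (k+1) * fact (n + k + 1) / fact (k + 2)
          * zeta_E (real (n + k + 2)) q)" for k
  proof -
    have "real (n + Suc k choose (Suc k + 1)) = fact (n + k + 1) / (fact (k + 2) * fact (n - 1))"
      using n by (subst binomial_fact) (auto simp: Suc_diff_le)
    then show ?thesis
      by (simp add: field_simps)
  qed
qed (use q in auto)

lemma higher_deriv_psi_tilde_odd_terms:
  fixes q :: real
  assumes n: "n \<ge> 1" and q: "q > 1"
  shows "summable (\<lambda>k. fact (n + 2 * (k+1)) / fact (2 * (k+1) + 1)
                           * zeta_E (real (n + 2 * (k+1) + 1)) q)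
         \<and> (deriv ^^ n) psi_tilde q =
             1/2 * (-1) ^ (n+1) * fact (n - 1) * (1 / (q - 1) ^ n - 1 / q ^ n)
             + (-1) ^ n * (\<Sum>k. fact (n + 2 * (k+1)) / fact (2 * (k+1) + 1)
                           * zeta_E (real (n + 2 * (k+1) + 1)) q)"
proof (rule higher_deriv_psi_tilde_via_zeta_E_series[OF n])
  let ?c = "\<lambda>j. 2 * real (n + 2*j choose (2*j+1))"
  show "(\<lambda>j. ?c j * zeta_E (real (n + 1 + 2*j)) q) sums (1 / (q - 1) ^ n - 1 / q ^ n)"
  proof -
    have "(\<lambda>j. ?c j / (real m + q) ^ (n + 1 + 2*j)) sums
            (1 / (real m + (q - 1)) ^ n - 1 / (real m + (q - 1) + 2) ^ n)" for m
      using sums_inverse_power_symmetric_diff[OF n, of 1 "real m + q"] q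
      by (simp add: add_diff_eq add_ac)
    from sums_zeta_E_of_inverse_power_expansion[OF _ _ n _ _ this] q show ?thesis
      by simp
  qed
  show "?c (Suc k) * zeta_E (real (n + 1 + 2 * Suc k)) q =
        2 / fact (n - 1) * (fact (n + 2 * (k+1)) / fact (2 * (k+1) + 1)
          * zeta_E (real (n + 2 * (k+1) + 1)) q)" for k
  proof -
    have "real (n + 2 * Suc k choose (2 * Suc k + 1))
          = fact (n + 2 * (k+1)) / (fact (2 * (k+1) + 1) * fact (n - 1))"
      using n by (subst binomial_fact) (auto simp: Suc_diff_le)
    then show ?thesis
      by (simp add: field_simps)
  qed
qed (use q in auto)

theorem proposition3p20:
  fixes n :: nat
  assumes "n \<ge> 1"
  shows "(\<forall>q::real. q > 2 \<longrightarrow>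
           summable (\<lambda>k. 2 ^ (k+1) * fact (n + k + 1) / fact (k + 2)
                           * zeta_E (real (n + k + 2)) q)
         \<and> (deriv ^^ n) psi_tilde q =
             1/2 * (-1) ^ (n+1) * fact (n - 1) * (1 / (q - 2) ^ n - 1 / (q - 1) ^ n)
             + (-1) ^ n * (\<Sum>k. 2 ^ (k+1) * fact (n + k + 1) / fact (k + 2)
                           * zeta_E (real (n + k + 2)) q))
    \<and> (\<forall>q::real. q > 1 \<longrightarrow>
           summable (\<lambda>k. fact (n + 2 * (k+1)) / fact (2 * (k+1) + 1)
                           * zeta_E (real (n + 2 * (k+1) + 1)) q)
         \<and> (deriv ^^ n) psi_tilde q =
             1/2 * (-1) ^ (n+1) * fact (n - 1) * (1 / (q - 1) ^ n - 1 / q ^ n)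
             + (-1) ^ n * (\<Sum>k. fact (n + 2 * (k+1)) / fact (2 * (k+1) + 1)
                           * zeta_E (real (n + 2 * (k+1) + 1)) q))"
  using higher_deriv_psi_tilde_shift_two[OF assms] higher_deriv_psi_tilde_odd_terms[OF assms]
  by blast

end
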